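(* Let $b,\beta,\beta'\in\mathbb{R}$, $\gamma>0$, $\gamma'\ge0$ and $c\ge-\gamma$. Then \[ \mu_{b,c,\beta,\gamma}\rhd\mu_{b+\beta,\,c+\gamma,\,\beta',\,\gamma'}=\mu_{b,c,\beta+\beta',\gamma+\gamma'}. \] In particular, for normalized free Meixner distributions $\mu_{b,c}=\mu_{b,c,0,1}$ with $c\ge-1$, $\mu_{b,c}\rhd\mu_{b,c+1}=\mu_{b,c}^{\boxplus2}$.
   Context: For real $b,c,\beta,\gamma$ with $\gamma\ge0$ and $c+\gamma\ge0$, the free Meixner distribution $\mu_{b,c,\beta,\gamma}$ is the compactly supported probability measure on $\mathbb{R}$ with Jacobi parameters $(\beta_0,\beta_1,\beta_2,\dots)=(\beta,b+\beta,b+\beta,\dots)$ and $(\gamma_0,\gamma_1,\dots)=(\gamma,c+\gamma,c+\gamma,\dots)$, i.e. whose Cauchy transform $G(z)=\int\frac{d\mu(x)}{z-x}$ has the continued fraction expansion $1/(z-\beta_0-\gamma_0/(z-\beta_1-\gamma_1/(z-\beta_2-\cdots)))$. For probability measures $\mu,\nu$ with $F_\mu=1/G_\mu$, the monotone convolution $\mu\rhd\nu$ is the probability measure with $F_{\mu\rhd\nu}=F_\mu\circ F_\nu$. $\boxplus$ is free convolution. *)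

theory Defs
  imports "HOL-Probability.Probability"
begin

definition real_prob :: "real measure \<Rightarrow> bool" where
  "real_prob \<mu> \<longleftrightarrow> prob_space \<mu> \<and> sets \<mu> = sets borel"

definition compact_support :: "real measure \<Rightarrow> bool" where
  "compact_support \<mu> \<longleftrightarrow> (\<exists>K. compact K \<and> emeasure \<mu> K = 1)"

definition cauchy_tr :: "real measure \<Rightarrow> complex \<Rightarrow> complex" where
  "cauchy_tr \<mu> z = integral\<^sup>L \<mu> (\<lambda>x. 1 / (z - complex_of_real x))"

definition recip_cauchy_tr :: "real measure \<Rightarrow> complex \<Rightarrow> complex" where
  "recip_cauchy_tr \<mu> z = 1 / cauchy_tr \<mu> z"

fun jacobi_cf :: "(nat \<Rightarrow> real) \<Rightarrow> (nat \<Rightarrow> real) \<Rightarrow> nat \<Rightarrow> nat \<Rightarrow> complex \<Rightarrow> complex" where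
  "jacobi_cf bs gs 0 k z = 0"
| "jacobi_cf bs gs (Suc n) k z =
     1 / (z - complex_of_real (bs k) - complex_of_real (gs k) * jacobi_cf bs gs n (Suc k) z)"

definition has_jacobi_params :: "real measure \<Rightarrow> (nat \<Rightarrow> real) \<Rightarrow> (nat \<Rightarrow> real) \<Rightarrow> bool" where
  "has_jacobi_params \<mu> bs gs \<longleftrightarrow>
     (\<forall>z. Im z > 0 \<longrightarrow> (\<lambda>n. jacobi_cf bs gs n 0 z) \<longlonglongrightarrow> cauchy_tr \<mu> z)"

definition is_free_meixner :: "real measure \<Rightarrow> real \<Rightarrow> real \<Rightarrow> real \<Rightarrow> real \<Rightarrow> bool" where
  "is_free_meixner \<mu> b c \<beta> \<gamma> \<longleftrightarrow>
     real_prob \<mu> \<and> compact_support \<mu> \<and>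
     has_jacobi_params \<mu> (\<lambda>n. if n = 0 then \<beta> else b + \<beta>) (\<lambda>n. if n = 0 then \<gamma> else c + \<gamma>)"

definition is_monotone_conv :: "real measure \<Rightarrow> real measure \<Rightarrow> real measure \<Rightarrow> bool" where
  "is_monotone_conv \<mu> \<nu> \<rho> \<longleftrightarrow> real_prob \<rho> \<and>
     (\<forall>z. Im z > 0 \<longrightarrow> recip_cauchy_tr \<rho> z = recip_cauchy_tr \<mu> (recip_cauchy_tr \<nu> z))"

definition cauchy_inv :: "real measure \<Rightarrow> real \<Rightarrow> complex \<Rightarrow> complex" where
  "cauchy_inv \<mu> R w = (THE z. cmod z > R \<and> cauchy_tr \<mu> z = w)"

text \<open>rho is the free convolution mu boxplus nu (for compactly supported measures):
  the R-transforms R(w) = G^{-1}(w) - 1/w add on a punctured neighbourhood of 0,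
  where G^{-1} is the inverse of G near infinity.\<close>
definition is_free_conv :: "real measure \<Rightarrow> real measure \<Rightarrow> real measure \<Rightarrow> bool" where
  "is_free_conv \<mu> \<nu> \<rho> \<longleftrightarrow> real_prob \<mu> \<and> real_prob \<nu> \<and> real_prob \<rho> \<and>
     (\<exists>R r. r > 0 \<and> (\<forall>w. 0 < cmod w \<and> cmod w < r \<longrightarrow>
        (\<forall>m\<in>{\<mu>, \<nu>, \<rho>}. \<exists>!z. cmod z > R \<and> cauchy_tr m z = w) \<and>
        cauchy_inv \<rho> R w - 1 / w = (cauchy_inv \<mu> R w - 1 / w) + (cauchy_inv \<nu> R w - 1 / w)))"

end

theory Submission
  imports Defs
begin

text \<open>
  The Cauchy transform of the free Meixner law mu_{b,c,beta,gamma} (gamma > 0) is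
  G(z) = 1 / (z - beta - gamma L(z)), where L(z) is the limit of the tail of its continued
  fraction, i.e. of the continued fraction with constant Jacobi parameters (b + beta, c + gamma).
  On the upper half plane L(z) is the unique root with Im L \<le> 0 of
  (c + gamma) L^2 - (z - b - beta) L + 1 = 0.

  Part 1.  For nu = mu_{b+beta,c+gamma,beta',gamma'} we have F_nu(z) = z - beta' - gamma' L'(z),
  with L'(z) the tail limit of the claimed law mu_{b,c,beta+beta',gamma+gamma'}.  A direct computation
  shows that L'(z) solves the fixed point equation of mu at w = F_nu(z), so L(w) = L'(z) and
  F_mu(F_nu(z)) = z - (beta + beta') - (gamma + gamma') L'(z): the composition has the Jacobi
  parameters of the claimed law.  Compact support of the monotone convolution follows from the
  Poisson bound mu(ball x e) \<le> 2e (-Im G(x + ie)), since -Im G_rho(x + ie) = O(e) far out.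

  Part 2.  By Part 1, mu_{b,c} |> mu_{b,c+1} = mu_{b,c,0,2}.  The Cauchy transform of
  mu_{b,c,0,t} satisfies an explicit quadratic relation (the Meixner equation) off the support;
  solving it near infinity gives the inverse 1/w + t S(w) with an explicit S independent of t.
  Hence the R-transform of mu_{b,c,0,t} is t S, and R-transforms add as free convolution requires.
\<close>

section \<open>Cauchy transforms of Borel probability measures on the real line\<close>

lemma unit_interval_cover:
  assumes N: "real N \<ge> 1"
  shows "{p..p+1} \<subseteq> (\<Union>j\<in>{..N}. ball (p + real j / real N) (1 / real N))"
proof
  fix t assume t: "t \<in> {p..p+1}"
  define j where "j = nat \<lfloor>(t - p) * real N\<rfloor>"
  have "0 \<le> (t - p) * real N" "(t - p) * real N \<le> real N" using t N by auto
  then have j: "real j \<le> (t - p) * real N" "(t - p) * real N < real j + 1" "j \<le> N"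
    unfolding j_def by linarith+
  have "(t - (p + real j / real N)) * real N = (t - p) * real N - real j"
    using N by (simp add: field_simps)
  then have "0 \<le> (t - (p + real j / real N)) * real N" "(t - (p + real j / real N)) * real N < 1"
    using j by linarith+
  then have "0 \<le> t - (p + real j / real N)" "t - (p + real j / real N) < 1 / real N"
    using N by (auto simp: zero_le_mult_iff divide_simps)
  then have "dist (p + real j / real N) t < 1 / real N" by (simp add: dist_real_def)
  then show "t \<in> (\<Union>j\<in>{..N}. ball (p + real j / real N) (1 / real N))" using j(3) by auto
qed

locale real_prob_measure =
  fixes M :: "real measure"
  assumes real_prob: "real_prob M"
begin

sublocale prob_space M
  using real_prob unfolding real_prob_def by blast

lemma sets_M [measurable_cong]: "sets M = sets borel"
  using real_prob unfolding real_prob_def by blast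

lemma space_M: "space M = UNIV"
  using sets_eq_imp_space_eq[OF sets_M] by simp

lemma norm_integral_le_AE:
  fixes f :: "real \<Rightarrow> complex"
  assumes "integrable M f" "AE t in M. norm (f t) \<le> B"
  shows "norm (integral\<^sup>L M f) \<le> B"
proof -
  have "norm (integral\<^sup>L M f) \<le> (\<integral>t. norm (f t) \<partial>M)" by (rule integral_norm_bound)
  also have "\<dots> \<le> B" using assms by (intro integral_le_const) auto
  finally show ?thesis .
qed

lemma cauchy_kernel_integrable:
  assumes "d > 0" "AE t in M. d \<le> cmod (z - complex_of_real t)"
  shows "integrable M (\<lambda>t. 1 / (z - complex_of_real t))"
proof (rule integrable_const_bound[where B = "1 / d"])
  show "AE t in M. norm (1 / (z - complex_of_real t)) \<le> 1 / d"
    using assms(2) by eventually_elim (use assms(1) in \<open>simp add: norm_divide divide_simps\<close>)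
qed measurable

lemma dist_upper_half_plane: "Im z \<le> cmod (z - complex_of_real t)"
  using abs_Im_le_cmod[of "z - complex_of_real t"] by simp

lemma integrable_cauchy_kernel_upper:
  "Im z > 0 \<Longrightarrow> integrable M (\<lambda>t. 1 / (z - complex_of_real t))"
  by (rule cauchy_kernel_integrable) (auto intro: dist_upper_half_plane)

lemma cauchy_tr_cnj: "cauchy_tr M (cnj z) = cnj (cauchy_tr M z)"
proof -
  have "(\<lambda>t. 1 / (cnj z - complex_of_real t)) = (\<lambda>t. cnj (1 / (z - complex_of_real t)))" by auto
  then show ?thesis unfolding cauchy_tr_def by (simp only: Bochner_Integration.integral_cnj)
qed

lemma Poisson_kernel_integrable:
  assumes "Im z > 0"
  shows "integrable M (\<lambda>t. Im z / (cmod (z - complex_of_real t))\<^sup>2)"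
proof (rule integrable_const_bound[where B = "1 / Im z"])
  show "AE t in M. norm (Im z / (cmod (z - complex_of_real t))\<^sup>2) \<le> 1 / Im z"
  proof (rule AE_I2)
    fix t
    have "Im z / (cmod (z - complex_of_real t))\<^sup>2 \<le> Im z / (Im z)\<^sup>2"
      using assms dist_upper_half_plane[of z t] by (intro divide_left_mono power_mono mult_pos_pos) auto
    then show "norm (Im z / (cmod (z - complex_of_real t))\<^sup>2) \<le> 1 / Im z"
      using assms by (simp add: power2_eq_square)
  qed
qed measurable

lemma Im_cauchy_tr_Poisson:
  assumes "Im z > 0"
  shows "- Im (cauchy_tr M z) = (\<integral>t. Im z / (cmod (z - complex_of_real t))\<^sup>2 \<partial>M)"
proof -
  have "Im (cauchy_tr M z) = (\<integral>t. Im (1 / (z - complex_of_real t)) \<partial>M)"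
    unfolding cauchy_tr_def using integrable_cauchy_kernel_upper[OF assms] by simp
  also have "\<dots> = (\<integral>t. - (Im z / (cmod (z - complex_of_real t))\<^sup>2) \<partial>M)"
    by (intro Bochner_Integration.integral_cong refl) (simp add: Im_divide cmod_power2)
  finally show ?thesis by simp
qed

text \<open>The Cauchy transform maps the upper half plane into the lower one; in particular it does not
  vanish there, so the reciprocal Cauchy transform is meaningful.\<close>
lemma Im_cauchy_tr_neg:
  assumes "Im z > 0"
  shows "Im (cauchy_tr M z) < 0"
proof -
  let ?P = "\<lambda>t. Im z / (cmod (z - complex_of_real t))\<^sup>2"
  have pos: "?P t > 0" for t
    using assms dist_upper_half_plane[of z t] by (intro divide_pos_pos) auto
  have "(\<integral>t. ?P t \<partial>M) \<ge> 0"
    using pos by (intro integral_nonneg_AE) (auto intro: less_imp_le)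
  moreover have "(\<integral>t. ?P t \<partial>M) \<noteq> 0"
  proof
    assume "(\<integral>t. ?P t \<partial>M) = 0"
    then have "AE t in M. ?P t = 0"
      using integral_nonneg_eq_0_iff_AE[OF Poisson_kernel_integrable[OF assms]] pos
      by (auto intro: less_imp_le)
    then have "AE t in M. False" by eventually_elim (use pos in \<open>metis less_irrefl\<close>)
    then show False by simp
  qed
  ultimately show ?thesis using Im_cauchy_tr_Poisson[OF assms] by linarith
qed

text \<open>Poisson bound: the mass of a ball of radius e around x is controlled by the Cauchy transform
  at x + ie, since the Poisson kernel is at least 1/(2e) on that ball.\<close>
lemma measure_ball_le_Poisson:
  assumes "e > 0"
  shows "measure M (ball x e) \<le> 2 * e * (- Im (cauchy_tr M (Complex x e)))"
proof -
  let ?z = "Complex x e"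
  have "measure M (ball x e) / (2 * e) = (\<integral>t. indicator (ball x e) t / (2 * e) \<partial>M)"
    using space_M by simp
  also have "\<dots> \<le> (\<integral>t. Im ?z / (cmod (?z - complex_of_real t))\<^sup>2 \<partial>M)"
  proof (rule integral_mono[OF _ Poisson_kernel_integrable])
    show "integrable M (\<lambda>t. indicator (ball x e) t / (2 * e) :: real)"
      by (intro integrable_divide integrable_real_indicator) (auto simp: emeasure_eq_measure)
    fix t
    show "indicator (ball x e) t / (2 * e) \<le> Im ?z / (cmod (?z - complex_of_real t))\<^sup>2"
    proof (cases "t \<in> ball x e")
      case True
      then have "\<bar>x - t\<bar> < e" by (simp add: dist_real_def)
      then have "(x - t)\<^sup>2 < e\<^sup>2" by (metis abs_ge_zero power2_abs power_strict_mono zero_less_numeral)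
      then have "e / (2 * e\<^sup>2) \<le> e / ((x - t)\<^sup>2 + e\<^sup>2)"
        using assms by (intro divide_left_mono) (auto intro!: mult_pos_pos add_nonneg_pos)
      moreover have "(cmod (?z - complex_of_real t))\<^sup>2 = (x - t)\<^sup>2 + e\<^sup>2"
        by (simp add: cmod_power2)
      ultimately show ?thesis using True assms by (simp add: power2_eq_square)
    qed (use assms in simp)
  qed (use assms in simp)
  also have "\<dots> = - Im (cauchy_tr M ?z)" using Im_cauchy_tr_Poisson assms by simp
  finally show ?thesis using assms by (simp add: divide_simps mult.commute)
qed


text \<open>If the balls centred in a unit interval have measure O(e^2), the interval is a null set:
  covering it by N + 1 balls of radius 1/N gives mass O(1/N).\<close>
lemma null_interval_if_small_balls:
  assumes C: "C \<ge> 0"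
    and small: "\<And>x e. x \<in> {p..p+1} \<Longrightarrow> 0 < e \<Longrightarrow> e \<le> 1 \<Longrightarrow> measure M (ball x e) \<le> C * e\<^sup>2"
  shows "measure M {p..p+1} = 0"
proof (rule ccontr)
  define m where "m = measure M {p..p+1}"
  assume "measure M {p..p+1} \<noteq> 0"
  then have mpos: "m > 0" using measure_nonneg[of M "{p..p+1}"] unfolding m_def by linarith
  obtain n :: nat where n: "real n > 2 * C / m" using reals_Archimedean2 by blast
  define N where "N = Suc n"
  have N1: "real N \<ge> 1" and N: "real N > 2 * C / m" using n unfolding N_def by simp_all
  define centre where "centre j = p + real j / real N" for j :: nat
  note cover = unit_interval_cover[OF N1, of p, folded centre_def]
  have "m \<le> measure M (\<Union>j\<in>{..N}. ball (centre j) (1 / real N))"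
    unfolding m_def using cover by (intro finite_measure_mono) auto
  also have "\<dots> \<le> (\<Sum>j\<in>{..N}. measure M (ball (centre j) (1 / real N)))"
    by (rule finite_measure_subadditive_finite) auto
  also have "\<dots> \<le> (\<Sum>j\<in>{..N}. C * (1 / real N)\<^sup>2)"
  proof (rule sum_mono)
    fix j assume "j \<in> {..N}"
    then have "real j / real N \<le> 1" using N1 by (simp add: divide_simps)
    then have "centre j \<in> {p..p+1}" using N1 unfolding centre_def by auto
    then show "measure M (ball (centre j) (1 / real N)) \<le> C * (1 / real N)\<^sup>2"
      using N1 by (intro small) auto
  qed
  also have "\<dots> = (real N + 1) * C / (real N)\<^sup>2" by (simp add: power2_eq_square)
  also have "\<dots> \<le> (2 * real N) * C / (real N)\<^sup>2"
    using C N1 by (intro divide_right_mono mult_right_mono) auto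
  also have "\<dots> = 2 * C / real N" using N1 by (simp add: power2_eq_square)
  also have "\<dots> < m" using N N1 mpos by (simp add: divide_simps mult.commute)
  finally show False by simp
qed

lemma AE_bounded_if_small_balls:
  assumes C: "C \<ge> 0"
    and small: "\<And>x e. R \<le> \<bar>x\<bar> \<Longrightarrow> 0 < e \<Longrightarrow> e \<le> 1 \<Longrightarrow> measure M (ball x e) \<le> C * e\<^sup>2"
  shows "AE t in M. \<bar>t\<bar> \<le> R"
proof -
  define I where "I k = {R + real k..R + real k + 1}" for k :: nat
  define J where "J k = {- (R + real k + 1)..- (R + real k + 1) + 1}" for k :: nat
  have "measure M (I k) = 0" for k
    unfolding I_def by (rule null_interval_if_small_balls[OF C]) (auto intro!: small)
  moreover have "measure M (J k) = 0" for k
    unfolding J_def by (rule null_interval_if_small_balls[OF C]) (auto intro!: small)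
  ultimately have null: "I k \<in> null_sets M" "J k \<in> null_sets M" for k
    by (auto intro!: null_setsI simp: emeasure_eq_measure I_def J_def)
  have "AE t in M. t \<notin> (\<Union>k. I k \<union> J k)"
    by (intro AE_not_in null_sets_UN null_sets.Un null)
  then show ?thesis
  proof eventually_elim
    case (elim t)
    show "\<bar>t\<bar> \<le> R"
    proof (rule ccontr)
      assume "\<not> \<bar>t\<bar> \<le> R"
      then consider "t > R" | "- t > R" by linarith
      then show False
      proof cases
        case 1
        then have "t \<in> I (nat \<lfloor>t - R\<rfloor>)" unfolding I_def by auto linarith+
        then show False using elim by blast
      next
        case 2
        then have "t \<in> J (nat \<lfloor>- t - R\<rfloor>)" unfolding J_def by auto linarith+
        then show False using elim by blast
      qed
    qed
  qed
qed

lemma compact_support_iff_AE_bounded: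
  "compact_support M \<longleftrightarrow> (\<exists>K. AE t in M. \<bar>t\<bar> \<le> K)"
proof
  assume "compact_support M"
  then obtain S where S: "compact S" "emeasure M S = 1" unfolding compact_support_def by blast
  obtain B where B: "\<forall>x\<in>S. norm x \<le> B" using compact_imp_bounded[OF S(1)] unfolding bounded_iff by blast
  have "AE t in M. t \<in> S" using S(2) by (intro AE_prob_1) (simp add: emeasure_eq_measure)
  then have "AE t in M. \<bar>t\<bar> \<le> B" by eventually_elim (use B in auto)
  then show "\<exists>K. AE t in M. \<bar>t\<bar> \<le> K" ..
next
  assume "\<exists>K. AE t in M. \<bar>t\<bar> \<le> K"
  then obtain K where "AE t in M. \<bar>t\<bar> \<le> K" ..
  then have "AE t in M. t \<in> {-K..K}" by eventually_elim auto
  moreover have "{-K..K} \<in> events" by (simp add: sets_M)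
  ultimately have "prob {-K..K} = 1" using AE_in_set_eq_1 by blast
  then show "compact_support M"
    unfolding compact_support_def by (intro exI[of _ "{-K..K}"]) (simp add: emeasure_eq_measure)
qed

end

locale bounded_support = real_prob_measure +
  fixes K :: real
  assumes AE_bounded: "AE t in M. \<bar>t\<bar> \<le> K"
begin

lemma K_nonneg: "K \<ge> 0"
proof -
  have "AE t in M. 0 \<le> K" using AE_bounded by eventually_elim auto
  then show ?thesis by simp
qed

lemma dist_support: "\<bar>t\<bar> \<le> K \<Longrightarrow> cmod z - K \<le> cmod (z - complex_of_real t)"
  using norm_triangle_ineq2[of z "complex_of_real t"] by simp

lemma AE_dist_support: "AE t in M. cmod z - K \<le> cmod (z - complex_of_real t)"
  using AE_bounded by eventually_elim (rule dist_support)

lemma integrable_off_support: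
  "K < cmod z \<Longrightarrow> integrable M (\<lambda>t. 1 / (z - complex_of_real t))"
  by (rule cauchy_kernel_integrable[OF _ AE_dist_support]) simp

text \<open>z G(z) - 1 is the integral of t / (z - t), hence of size K / (|z| - K).\<close>
lemma cauchy_tr_near_infinity:
  assumes z: "K < cmod z"
  shows "cmod (z * cauchy_tr M z - 1) \<le> K / (cmod z - K)"
proof -
  have I: "integrable M (\<lambda>t. z * (1 / (z - complex_of_real t)))"
    by (rule integrable_mult_right[OF integrable_off_support[OF z]])
  have "(\<integral>t. z * (1 / (z - complex_of_real t)) - 1 \<partial>M)
      = (\<integral>t. z * (1 / (z - complex_of_real t)) \<partial>M) - (\<integral>t. 1 \<partial>M)"
    using I by (intro Bochner_Integration.integral_diff) auto
  also have "\<dots> = z * cauchy_tr M z - 1"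
    unfolding cauchy_tr_def by (subst integral_mult_right_zero) (simp add: prob_space)
  finally have "z * cauchy_tr M z - 1 = (\<integral>t. z * (1 / (z - complex_of_real t)) - 1 \<partial>M)" ..
  also have "cmod \<dots> \<le> K / (cmod z - K)"
  proof (rule norm_integral_le_AE)
    show "integrable M (\<lambda>t. z * (1 / (z - complex_of_real t)) - 1)" using I by simp
    show "AE t in M. cmod (z * (1 / (z - complex_of_real t)) - 1) \<le> K / (cmod z - K)"
      using AE_bounded
    proof eventually_elim
      case (elim t)
      have d: "cmod z - K \<le> cmod (z - complex_of_real t)" using elim by (rule dist_support)
      then have "z - complex_of_real t \<noteq> 0" using z by auto
      then have "z * (1 / (z - complex_of_real t)) - 1 = complex_of_real t / (z - complex_of_real t)"
        by (simp add: field_simps)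
      then have "cmod (z * (1 / (z - complex_of_real t)) - 1) = \<bar>t\<bar> / cmod (z - complex_of_real t)"
        by (simp add: norm_divide)
      also have "\<dots> \<le> K / (cmod z - K)" using d elim z by (intro frac_le) auto
      finally show ?case .
    qed
  qed
  finally show ?thesis .
qed

lemma Im_cauchy_tr_off_support:
  assumes "K < cmod z" "Im z > 0"
  shows "- Im (cauchy_tr M z) \<le> Im z / (cmod z - K)\<^sup>2"
  unfolding Im_cauchy_tr_Poisson[OF assms(2)]
proof (rule integral_le_const[OF Poisson_kernel_integrable[OF assms(2)]])
  show "AE t in M. Im z / (cmod (z - complex_of_real t))\<^sup>2 \<le> Im z / (cmod z - K)\<^sup>2"
    using AE_dist_support[of z] by eventually_elim (use assms in \<open>auto intro!: divide_left_mono power_mono mult_pos_pos\<close>)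
qed

lemma cauchy_tr_lipschitz:
  assumes z: "K < cmod z" and z': "K < cmod z'"
  shows "cmod (cauchy_tr M z - cauchy_tr M z') \<le> cmod (z - z') / ((cmod z - K) * (cmod z' - K))"
proof -
  note I = integrable_off_support[OF z] integrable_off_support[OF z']
  have "cauchy_tr M z - cauchy_tr M z' =
      (\<integral>t. 1 / (z - complex_of_real t) - 1 / (z' - complex_of_real t) \<partial>M)"
    unfolding cauchy_tr_def using I by simp
  also have "cmod \<dots> \<le> cmod (z - z') / ((cmod z - K) * (cmod z' - K))"
  proof (rule norm_integral_le_AE)
    show "integrable M (\<lambda>t. 1 / (z - complex_of_real t) - 1 / (z' - complex_of_real t))"
      using I by simp
    show "AE t in M. cmod (1 / (z - complex_of_real t) - 1 / (z' - complex_of_real t))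
        \<le> cmod (z - z') / ((cmod z - K) * (cmod z' - K))"
      using AE_bounded
    proof eventually_elim
      case (elim t)
      have d: "cmod z - K \<le> cmod (z - complex_of_real t)" "cmod z' - K \<le> cmod (z' - complex_of_real t)"
        using elim by (auto intro: dist_support)
      then have "z - complex_of_real t \<noteq> 0" "z' - complex_of_real t \<noteq> 0" using z z' by auto
      then have "1 / (z - complex_of_real t) - 1 / (z' - complex_of_real t) =
          (z' - z) / ((z - complex_of_real t) * (z' - complex_of_real t))"
        by (simp add: field_simps)
      then have "cmod (1 / (z - complex_of_real t) - 1 / (z' - complex_of_real t)) =
          cmod (z - z') / (cmod (z - complex_of_real t) * cmod (z' - complex_of_real t))"
        by (simp add: norm_divide norm_mult norm_minus_commute)
      also have "\<dots> \<le> cmod (z - z') / ((cmod z - K) * (cmod z' - K))"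
        using d z z' by (intro divide_left_mono mult_mono mult_pos_pos) auto
      finally show ?case .
    qed
  qed
  finally show ?thesis .
qed

lemma cauchy_tr_tendsto:
  assumes lim: "zs \<longlonglongrightarrow> z" and z: "K < cmod z" and outside: "\<And>n. cmod z \<le> cmod (zs n)"
  shows "(\<lambda>n. cauchy_tr M (zs n)) \<longlonglongrightarrow> cauchy_tr M z"
proof -
  define d where "d = cmod z - K"
  have d: "d > 0" using z unfolding d_def by simp
  have bound: "cmod (cauchy_tr M (zs n) - cauchy_tr M z) \<le> cmod (zs n - z) / (d * d)" for n
  proof -
    have "cmod (cauchy_tr M (zs n) - cauchy_tr M z) \<le> cmod (zs n - z) / ((cmod (zs n) - K) * d)"
      using cauchy_tr_lipschitz[of "zs n" z] z outside[of n] unfolding d_def by fastforce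
    also have "\<dots> \<le> cmod (zs n - z) / (d * d)"
      using d outside[of n] unfolding d_def by (intro divide_left_mono mult_right_mono) auto
    finally show ?thesis .
  qed
  have small: "(\<lambda>n. cmod (zs n - z) / (d * d)) \<longlonglongrightarrow> 0"
    using tendsto_divide[OF tendsto_norm_zero[OF LIM_zero[OF lim]] tendsto_const, of "d * d"] d by simp
  have "(\<lambda>n. cauchy_tr M (zs n) - cauchy_tr M z) \<longlonglongrightarrow> 0"
    by (rule Lim_null_comparison[OF _ small]) (auto intro!: always_eventually bound)
  then show ?thesis by (rule LIM_zero_cancel)
qed

text \<open>Far from the support, |z G(z) - 1| \<le> 1/3, so |G(z)| is at least 2 / (3 |z|).\<close>
lemma norm_cauchy_tr_lower:
  assumes z: "4 * K < cmod z"
  shows "2 / (3 * cmod z) \<le> cmod (cauchy_tr M z)"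
proof -
  have K: "K \<ge> 0" by (rule K_nonneg)
  then have "cmod (z * cauchy_tr M z - 1) \<le> K / (cmod z - K)"
    using z by (intro cauchy_tr_near_infinity) linarith
  also have "\<dots> \<le> 1 / 3" using z K by (simp add: divide_simps)
  finally have "cmod (z * cauchy_tr M z - 1) \<le> 1 / 3" .
  moreover have "1 - cmod (z * cauchy_tr M z) \<le> cmod (z * cauchy_tr M z - 1)"
    using norm_triangle_ineq2[of 1 "z * cauchy_tr M z"] by (simp add: norm_minus_commute)
  ultimately have "2 / 3 \<le> cmod z * cmod (cauchy_tr M z)" by (simp add: norm_mult)
  then show ?thesis using z K by (simp add: divide_simps algebra_simps)
qed

lemma recip_cauchy_tr_near_infinity:
  assumes z: "4 * K < cmod z"
  shows "cmod (recip_cauchy_tr M z - z) \<le> 3 * K"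
    and "Im z > 0 \<Longrightarrow> 0 < Im (recip_cauchy_tr M z) \<and> Im (recip_cauchy_tr M z) \<le> 9 * Im z"
proof -
  define d where "d = cmod z - K"
  define u where "u = cauchy_tr M z"
  have K: "K \<ge> 0" by (rule K_nonneg)
  have d: "d > 0" "3 * K \<le> d" "cmod z \<le> 2 * d" using z K unfolding d_def by auto
  have zu: "cmod (z * u - 1) \<le> K / d"
    unfolding u_def d_def using z K by (intro cauchy_tr_near_infinity) linarith
  have ul: "2 / (3 * cmod z) \<le> cmod u" unfolding u_def by (rule norm_cauchy_tr_lower[OF z])
  have z0: "cmod z > 0" using z K by linarith
  have upos: "cmod u > 0" using ul z0 by (smt (verit) divide_pos_pos)
  have F: "recip_cauchy_tr M z = 1 / u" unfolding recip_cauchy_tr_def u_def ..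
  have "cmod (1 / u - z) = cmod (z * u - 1) / cmod u"
    using upos by (simp add: norm_divide norm_minus_commute diff_divide_distrib[symmetric] field_simps)
  also have "\<dots> \<le> (K / d) / (2 / (3 * cmod z))"
    using zu ul upos z0 K d by (intro frac_le) auto
  also have "\<dots> = (3 * K / 2) * (cmod z / d)" using z0 d by (simp add: field_simps)
  also have "\<dots> \<le> (3 * K / 2) * 2" using d K by (intro mult_left_mono) (auto simp: divide_simps)
  finally show "cmod (recip_cauchy_tr M z - z) \<le> 3 * K" unfolding F by simp
  assume Imz: "Im z > 0"
  have ImF: "Im (1 / u) = - Im u / (cmod u)\<^sup>2" by (simp add: Im_divide cmod_power2)
  have "- Im u \<le> Im z / d\<^sup>2"
    unfolding u_def d_def using z K Imz by (intro Im_cauchy_tr_off_support) auto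
  then have "Im (1 / u) \<le> (Im z / d\<^sup>2) / (2 / (3 * cmod z))\<^sup>2"
    unfolding ImF using ul upos z0 Imz Im_cauchy_tr_neg[OF Imz]
    by (intro frac_le power_mono) (auto simp: u_def)
  also have "\<dots> = (9 / 4) * Im z * (cmod z / d)\<^sup>2" using z0 d by (simp add: field_simps power2_eq_square)
  also have "\<dots> \<le> (9 / 4) * Im z * 2\<^sup>2"
  proof -
    have "cmod z / d \<le> 2" "0 \<le> cmod z / d" using d by (simp_all add: divide_simps)
    then show ?thesis using Imz by (intro mult_left_mono power_mono) auto
  qed
  finally have "Im (1 / u) \<le> 9 * Im z" by simp
  moreover have "0 < Im (1 / u)"
    unfolding ImF using Im_cauchy_tr_neg[OF Imz] upos by (simp add: u_def divide_neg_pos)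
  ultimately show "0 < Im (recip_cauchy_tr M z) \<and> Im (recip_cauchy_tr M z) \<le> 9 * Im z"
    unfolding F by simp
qed

lemma bounded_support_mono: "K \<le> K' \<Longrightarrow> bounded_support M K'"
  using AE_bounded real_prob
  by unfold_locales (auto elim!: eventually_mono)

end

section \<open>Continued fractions with constant Jacobi parameters\<close>

text \<open>The truncations of the continued fraction with all Jacobi parameters equal to (a, g).  From
  the second level on, the continued fraction of a free Meixner law is of this form.\<close>
abbreviation const_cf :: "real \<Rightarrow> real \<Rightarrow> nat \<Rightarrow> complex \<Rightarrow> complex" where
  "const_cf a g n z \<equiv> jacobi_cf (\<lambda>_. a) (\<lambda>_. g) n 0 z"

lemma jacobi_cf_const_level:
  "jacobi_cf (\<lambda>_. a) (\<lambda>_. g) n k z = jacobi_cf (\<lambda>_. a) (\<lambda>_. g) n k' z"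
  by (induction n arbitrary: k k') simp_all

lemma const_cf_Suc:
  "const_cf a g (Suc n) z = 1 / (z - complex_of_real a - complex_of_real g * const_cf a g n z)"
  by (simp add: jacobi_cf_const_level[of a g n "Suc 0" z 0])

lemma jacobi_cf_first_level:
  "jacobi_cf (\<lambda>n. if n = 0 then \<beta> else a) (\<lambda>n. if n = 0 then \<gamma> else g) (Suc n) 0 z
     = 1 / (z - complex_of_real \<beta> - complex_of_real \<gamma> * const_cf a g n z)"
proof -
  have "jacobi_cf (\<lambda>n. if n = 0 then \<beta> else a) (\<lambda>n. if n = 0 then \<gamma> else g) n k z
      = jacobi_cf (\<lambda>_. a) (\<lambda>_. g) n k z" if "0 < k" for k
    using that by (induction n arbitrary: k) simp_all
  then show ?thesis by (simp add: jacobi_cf_const_level[of a g n "Suc 0" z 0])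
qed

lemma const_cf_translate: "const_cf a g n (z - complex_of_real s) = const_cf (a + s) g n z"
  by (induction n) (simp_all only: const_cf_Suc, simp_all add: algebra_simps)

lemma Im_denominator_ge:
  assumes "g \<ge> 0" "Im T \<le> 0"
  shows "Im z \<le> Im (z - complex_of_real a - complex_of_real g * T)"
  using assms by (simp add: mult_nonneg_nonpos)

lemma reciprocal_upper_half_plane:
  assumes "y \<le> Im D" "y > 0"
  shows "D \<noteq> 0" "Im (1 / D) \<le> 0" "cmod (1 / D) \<le> 1 / y"
proof -
  have "y \<le> cmod D" using assms abs_Im_le_cmod[of D] by auto
  then show "cmod (1 / D) \<le> 1 / y" using assms by (simp add: norm_divide divide_simps)
  show "D \<noteq> 0" using assms by auto
  show "Im (1 / D) \<le> 0" using assms by (simp add: Im_divide divide_nonpos_pos)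
qed

lemma const_cf_bounds:
  assumes "g \<ge> 0" "Im z > 0"
  shows "Im (const_cf a g n z) \<le> 0" "cmod (const_cf a g n z) \<le> 1 / Im z"
    "z - complex_of_real a - complex_of_real g * const_cf a g n z \<noteq> 0"
proof -
  have *: "Im (const_cf a g n z) \<le> 0 \<and> cmod (const_cf a g n z) \<le> 1 / Im z" for n
  proof (induction n)
    case (Suc n)
    then show ?case unfolding const_cf_Suc
      using reciprocal_upper_half_plane[OF Im_denominator_ge[OF assms(1)] assms(2)] by blast
  qed (use assms in simp)
  then show "Im (const_cf a g n z) \<le> 0" "cmod (const_cf a g n z) \<le> 1 / Im z" by auto
  show "z - complex_of_real a - complex_of_real g * const_cf a g n z \<noteq> 0"
    using reciprocal_upper_half_plane(1)[OF Im_denominator_ge[OF assms(1)] assms(2)] * by blast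
qed

lemma const_cf_lower:
  assumes "g \<ge> 0" "Im z > 0"
  shows "1 / (cmod (z - complex_of_real a) + g / Im z) \<le> cmod (const_cf a g (Suc n) z)"
proof -
  let ?D = "z - complex_of_real a - complex_of_real g * const_cf a g n z"
  have "cmod (complex_of_real g * const_cf a g n z) \<le> g / Im z"
    using mult_left_mono[OF const_cf_bounds(2)[OF assms, of a n] assms(1)] assms by (simp add: norm_mult)
  then have "cmod ?D \<le> cmod (z - complex_of_real a) + g / Im z"
    using norm_triangle_ineq4[of "z - complex_of_real a" "complex_of_real g * const_cf a g n z"] by simp
  moreover have "cmod ?D > 0" using const_cf_bounds(3)[OF assms] by simp
  ultimately show ?thesis unfolding const_cf_Suc by (simp add: norm_divide frac_le)
qed

lemma const_cf_limit:
  assumes "g \<ge> 0" "Im z > 0" and lim: "(\<lambda>n. const_cf a g n z) \<longlonglongrightarrow> L"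
  shows "Im L \<le> 0" "L \<noteq> 0" "complex_of_real g * L\<^sup>2 - (z - complex_of_real a) * L + 1 = 0"
proof -
  have "(\<lambda>n. Im (const_cf a g n z)) \<longlonglongrightarrow> Im L" by (intro tendsto_intros lim)
  then show "Im L \<le> 0" by (rule LIMSEQ_le_const2) (use const_cf_bounds[OF assms(1,2)] in auto)
  have limS: "(\<lambda>n. const_cf a g (Suc n) z) \<longlonglongrightarrow> L" using lim by (rule LIMSEQ_Suc)
  have "0 < cmod (z - complex_of_real a)" using assms by (auto simp: complex_eq_iff)
  then have pos: "0 < 1 / (cmod (z - complex_of_real a) + g / Im z)"
    using assms by (intro divide_pos_pos add_pos_nonneg) auto
  have "(\<lambda>n. cmod (const_cf a g (Suc n) z)) \<longlonglongrightarrow> cmod L" by (intro tendsto_intros limS)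
  then have "1 / (cmod (z - complex_of_real a) + g / Im z) \<le> cmod L"
    by (rule LIMSEQ_le_const) (use const_cf_lower[OF assms(1,2)] in auto)
  with pos show "L \<noteq> 0" by auto
  have one: "const_cf a g (Suc n) z * (z - complex_of_real a - complex_of_real g * const_cf a g n z) = 1"
    for n unfolding const_cf_Suc using const_cf_bounds(3)[OF assms(1,2)] by simp
  have "(\<lambda>n. const_cf a g (Suc n) z * (z - complex_of_real a - complex_of_real g * const_cf a g n z))
      \<longlonglongrightarrow> L * (z - complex_of_real a - complex_of_real g * L)"
    by (intro tendsto_intros limS lim)
  then have "L * (z - complex_of_real a - complex_of_real g * L) = 1"
    unfolding one using LIMSEQ_unique tendsto_const by blast
  then show "complex_of_real g * L\<^sup>2 - (z - complex_of_real a) * L + 1 = 0"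
    by (simp add: algebra_simps power2_eq_square)
qed

text \<open>For Im w > 0 the fixed point equation has at most one root in the closed lower half plane,
  because the two roots sum to (w - a) / g.\<close>
lemma fixed_point_root_unique:
  assumes "g \<ge> 0" "Im w > 0" "Im L1 \<le> 0" "Im L2 \<le> 0"
    and "complex_of_real g * L1\<^sup>2 - (w - complex_of_real a) * L1 + 1 = 0"
    and "complex_of_real g * L2\<^sup>2 - (w - complex_of_real a) * L2 + 1 = 0"
  shows "L1 = L2"
proof (rule ccontr)
  assume "L1 \<noteq> L2"
  moreover have "(L1 - L2) * (complex_of_real g * (L1 + L2) - (w - complex_of_real a)) =
      (complex_of_real g * L1\<^sup>2 - (w - complex_of_real a) * L1 + 1) -
      (complex_of_real g * L2\<^sup>2 - (w - complex_of_real a) * L2 + 1)"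
    by (simp add: algebra_simps power2_eq_square)
  ultimately have "complex_of_real g * (L1 + L2) = w - complex_of_real a" using assms(5,6) by simp
  then have "Im (complex_of_real g * (L1 + L2)) = Im (w - complex_of_real a)" by simp
  then have "g * (Im L1 + Im L2) = Im w" by simp
  moreover have "g * (Im L1 + Im L2) \<le> 0" using assms by (simp add: mult_nonneg_nonpos)
  ultimately show False using assms by simp
qed

section \<open>Cauchy transforms of free Meixner laws\<close>

lemma common_bounded_support:
  assumes "real_prob \<mu>" "compact_support \<mu>" "real_prob \<nu>" "compact_support \<nu>"
  shows "\<exists>K. bounded_support \<mu> K \<and> bounded_support \<nu> K"
proof -
  interpret \<mu>: real_prob_measure \<mu> by unfold_locales fact
  interpret \<nu>: real_prob_measure \<nu> by unfold_locales fact
  obtain K1 K2 where "AE t in \<mu>. \<bar>t\<bar> \<le> K1" "AE t in \<nu>. \<bar>t\<bar> \<le> K2"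
    using assms \<mu>.compact_support_iff_AE_bounded \<nu>.compact_support_iff_AE_bounded by blast
  then have "bounded_support \<mu> K1" "bounded_support \<nu> K2" by unfold_locales
  then have "bounded_support \<mu> (max K1 K2)" "bounded_support \<nu> (max K1 K2)"
    by (auto elim!: bounded_support.bounded_support_mono)
  then show ?thesis by blast
qed

lemma meixner_tail_limit:
  assumes m: "is_free_meixner m b c \<beta> \<gamma>" and \<gamma>: "\<gamma> > 0" and z: "Im z > 0"
  shows "\<exists>L. (\<lambda>n. const_cf (b + \<beta>) (c + \<gamma>) n z) \<longlonglongrightarrow> L \<and>
    cauchy_tr m z = 1 / (z - complex_of_real \<beta> - complex_of_real \<gamma> * L)"
proof -
  let ?G = "cauchy_tr m z"
  let ?T = "\<lambda>n. const_cf (b + \<beta>) (c + \<gamma>) n z"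
  let ?D = "\<lambda>n. z - complex_of_real \<beta> - complex_of_real \<gamma> * ?T n"
  interpret real_prob_measure m using m unfolding is_free_meixner_def by unfold_locales blast
  have G0: "?G \<noteq> 0" using Im_cauchy_tr_neg[OF z] by auto
  have "(\<lambda>n. jacobi_cf (\<lambda>n. if n = 0 then \<beta> else b + \<beta>) (\<lambda>n. if n = 0 then \<gamma> else c + \<gamma>) n 0 z)
      \<longlonglongrightarrow> ?G"
    using m z unfolding is_free_meixner_def has_jacobi_params_def by blast
  then have "(\<lambda>n. jacobi_cf (\<lambda>n. if n = 0 then \<beta> else b + \<beta>) (\<lambda>n. if n = 0 then \<gamma> else c + \<gamma>) (Suc n) 0 z)
      \<longlonglongrightarrow> ?G" by (rule LIMSEQ_Suc)
  then have "(\<lambda>n. 1 / ?D n) \<longlonglongrightarrow> ?G" by (simp only: jacobi_cf_first_level)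
  then have "(\<lambda>n. 1 / (1 / ?D n)) \<longlonglongrightarrow> 1 / ?G" by (intro tendsto_intros G0)
  then have "?D \<longlonglongrightarrow> 1 / ?G" by simp
  then have "(\<lambda>n. (z - complex_of_real \<beta> - ?D n) / complex_of_real \<gamma>)
      \<longlonglongrightarrow> (z - complex_of_real \<beta> - 1 / ?G) / complex_of_real \<gamma>"
    by (intro tendsto_intros) (use \<gamma> in auto)
  moreover have "(z - complex_of_real \<beta> - ?D n) / complex_of_real \<gamma> = ?T n" for n
    using \<gamma> by (simp add: field_simps)
  moreover have "?G = 1 / (z - complex_of_real \<beta> - complex_of_real \<gamma> *
      ((z - complex_of_real \<beta> - 1 / ?G) / complex_of_real \<gamma>))"
    using \<gamma> by (simp add: field_simps)
  ultimately show ?thesis by auto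
qed

lemma meixner_point_mass:
  assumes m: "is_free_meixner m b c \<beta> 0" and z: "Im z > 0"
  shows "cauchy_tr m z = 1 / (z - complex_of_real \<beta>)"
proof -
  have "(\<lambda>n. jacobi_cf (\<lambda>n. if n = 0 then \<beta> else b + \<beta>) (\<lambda>n. if n = 0 then 0 else c + 0) n 0 z)
      \<longlonglongrightarrow> cauchy_tr m z"
    using m z unfolding is_free_meixner_def has_jacobi_params_def by blast
  then have "(\<lambda>n. jacobi_cf (\<lambda>n. if n = 0 then \<beta> else b + \<beta>) (\<lambda>n. if n = 0 then 0 else c + 0) (Suc n) 0 z)
      \<longlonglongrightarrow> cauchy_tr m z" by (rule LIMSEQ_Suc)
  then have "(\<lambda>n. 1 / (z - complex_of_real \<beta>)) \<longlonglongrightarrow> cauchy_tr m z"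
    by (simp only: jacobi_cf_first_level) simp
  then show ?thesis using LIMSEQ_unique tendsto_const by blast
qed

lemma meixner_cf_tendsto:
  assumes lim: "(\<lambda>n. const_cf a g n z) \<longlonglongrightarrow> L" and "Im L \<le> 0" "\<gamma> \<ge> 0" "Im z > 0"
  shows "(\<lambda>n. jacobi_cf (\<lambda>n. if n = 0 then \<beta> else a) (\<lambda>n. if n = 0 then \<gamma> else g) n 0 z)
    \<longlonglongrightarrow> 1 / (z - complex_of_real \<beta> - complex_of_real \<gamma> * L)"
proof -
  have "z - complex_of_real \<beta> - complex_of_real \<gamma> * L \<noteq> 0"
    using reciprocal_upper_half_plane(1)[OF Im_denominator_ge] assms by blast
  then have "(\<lambda>n. 1 / (z - complex_of_real \<beta> - complex_of_real \<gamma> * const_cf a g n z))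
      \<longlonglongrightarrow> 1 / (z - complex_of_real \<beta> - complex_of_real \<gamma> * L)"
    by (intro tendsto_intros lim)
  then show ?thesis unfolding jacobi_cf_first_level[symmetric] by (rule LIMSEQ_imp_Suc)
qed

section \<open>Monotone convolution of free Meixner laws\<close>

lemma monotone_conv_cauchy_tr:
  assumes "is_monotone_conv \<mu> \<nu> \<rho>" "Im z > 0"
  shows "cauchy_tr \<rho> z = cauchy_tr \<mu> (recip_cauchy_tr \<nu> z)"
  using assms unfolding is_monotone_conv_def recip_cauchy_tr_def by (metis divide_cancel_left one_neq_zero)

text \<open>Far from the supports, F_nu moves x + ie by at most 3K and into height at most 9e; there
  G_mu has imaginary part at most 9e, which bounds the Poisson integral of the composition.\<close>
lemma monotone_conv_Poisson_bound:
  assumes \<mu>: "bounded_support \<mu> K" and \<nu>: "bounded_support \<nu> K"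
    and x: "4 * K + 1 \<le> \<bar>x\<bar>" and e: "0 < e" "e \<le> 1"
  shows "- Im (cauchy_tr \<mu> (recip_cauchy_tr \<nu> (Complex x e))) \<le> 9 * e"
proof -
  define z where "z = Complex x e"
  define F where "F = recip_cauchy_tr \<nu> z"
  have K: "K \<ge> 0" by (rule bounded_support.K_nonneg[OF \<nu>])
  have "\<bar>x\<bar> \<le> cmod z" unfolding z_def using abs_Re_le_cmod[of "Complex x e"] by simp
  then have z: "4 * K < cmod z" using x by linarith
  have "cmod (F - z) \<le> 3 * K" and F: "0 < Im F" "Im F \<le> 9 * e"
    using bounded_support.recip_cauchy_tr_near_infinity[OF \<nu> z] e unfolding F_def z_def by auto
  then have "\<bar>Re F - x\<bar> \<le> 3 * K" using abs_Re_le_cmod[of "F - z"] unfolding z_def by simp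
  then have F1: "K + 1 \<le> cmod F" using x abs_Re_le_cmod[of F] by linarith
  then have "- Im (cauchy_tr \<mu> F) \<le> Im F / (cmod F - K)\<^sup>2"
    using bounded_support.Im_cauchy_tr_off_support[OF \<mu> _ F(1)] by simp
  also have "\<dots> \<le> Im F"
    using F1 F(1) by (simp add: divide_le_eq mult_le_cancel_left1 one_le_power)
  finally show ?thesis using F(2) unfolding F_def z_def by simp
qed

text \<open>The monotone convolution of two compactly supported laws is compactly supported: by the
  Poisson bound its small balls far from the origin have measure O(e^2).\<close>
lemma compact_support_monotone_conv:
  assumes \<mu>: "bounded_support \<mu> K" and \<nu>: "bounded_support \<nu> K" and \<rho>: "real_prob \<rho>"
    and G: "\<And>z. Im z > 0 \<Longrightarrow> cauchy_tr \<rho> z = cauchy_tr \<mu> (recip_cauchy_tr \<nu> z)"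
  shows "compact_support \<rho>"
proof -
  interpret real_prob_measure \<rho> by unfold_locales (rule \<rho>)
  have "measure \<rho> (ball x e) \<le> 18 * e\<^sup>2" if "4 * K + 1 \<le> \<bar>x\<bar>" "0 < e" "e \<le> 1" for x e
  proof -
    have "measure \<rho> (ball x e) \<le> 2 * e * (- Im (cauchy_tr \<rho> (Complex x e)))"
      using measure_ball_le_Poisson that by blast
    also have "\<dots> \<le> 2 * e * (9 * e)"
      using G[of "Complex x e"] monotone_conv_Poisson_bound[OF \<mu> \<nu> that] that
      by (intro mult_left_mono) auto
    finally show ?thesis by (simp add: power2_eq_square)
  qed
  then have "AE t in \<rho>. \<bar>t\<bar> \<le> 4 * K + 1" by (intro AE_bounded_if_small_balls[of 18]) auto
  then show ?thesis using compact_support_iff_AE_bounded by blast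
qed

text \<open>For gamma' = 0 the law nu is a point mass, and the
  convergence of this tail comes from that of mu, translated by beta'.\<close>
lemma monotone_conv_second_factor:
  assumes \<gamma>: "\<gamma> > 0" "\<gamma>' \<ge> 0"
    and \<mu>: "is_free_meixner \<mu> b c \<beta> \<gamma>" and \<nu>: "is_free_meixner \<nu> (b + \<beta>) (c + \<gamma>) \<beta>' \<gamma>'"
    and z: "Im z > 0"
  shows "\<exists>L'. (\<lambda>n. const_cf (b + \<beta> + \<beta>') (c + \<gamma> + \<gamma>') n z) \<longlonglongrightarrow> L' \<and>
    recip_cauchy_tr \<nu> z = z - complex_of_real \<beta>' - complex_of_real \<gamma>' * L'"
proof (cases "\<gamma>' = 0")
  case True
  obtain L where "(\<lambda>n. const_cf (b + \<beta>) (c + \<gamma>) n (z - complex_of_real \<beta>')) \<longlonglongrightarrow> L"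
    using meixner_tail_limit[OF \<mu> \<gamma>(1), of "z - complex_of_real \<beta>'"] z by auto
  moreover have "recip_cauchy_tr \<nu> z = z - complex_of_real \<beta>'"
    using meixner_point_mass[of \<nu>] \<nu> z True unfolding recip_cauchy_tr_def by simp
  ultimately show ?thesis using True by (auto simp: const_cf_translate)
next
  case False
  then show ?thesis
    using meixner_tail_limit[OF \<nu> _ z] \<gamma>(2) unfolding recip_cauchy_tr_def by (auto simp: add.assoc)
qed

text \<open>With F_nu(z) = z - beta' - gamma' L' as above, L' solves the fixed
  point equation of the tail of mu at w = F_nu(z); by uniqueness of its root it is the tail limit
  of mu at w, whence F_mu(w) = z - (beta + beta') - (gamma + gamma') L'.\<close>
lemma monotone_conv_tail:
  assumes \<gamma>: "\<gamma> > 0" "\<gamma>' \<ge> 0" "c + \<gamma> \<ge> 0"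
    and \<mu>: "is_free_meixner \<mu> b c \<beta> \<gamma>" and \<nu>: "is_free_meixner \<nu> (b + \<beta>) (c + \<gamma>) \<beta>' \<gamma>'"
    and conv: "is_monotone_conv \<mu> \<nu> \<rho>" and z: "Im z > 0"
  shows "\<exists>L'. (\<lambda>n. const_cf (b + \<beta> + \<beta>') (c + \<gamma> + \<gamma>') n z) \<longlonglongrightarrow> L' \<and> Im L' \<le> 0 \<and>
    cauchy_tr \<rho> z = 1 / (z - complex_of_real (\<beta> + \<beta>') - complex_of_real (\<gamma> + \<gamma>') * L')"
proof -
  obtain L' where L': "(\<lambda>n. const_cf (b + \<beta> + \<beta>') (c + \<gamma> + \<gamma>') n z) \<longlonglongrightarrow> L'"
    and F: "recip_cauchy_tr \<nu> z = z - complex_of_real \<beta>' - complex_of_real \<gamma>' * L'"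
    using monotone_conv_second_factor[OF \<gamma>(1,2) \<mu> \<nu> z] by blast
  have \<gamma>'': "c + \<gamma> + \<gamma>' \<ge> 0" using \<gamma> by simp
  note L'_props = const_cf_limit[OF \<gamma>'' z L']
  define w where "w = recip_cauchy_tr \<nu> z"
  have "Im z \<le> Im w" unfolding w_def F using \<gamma>(2) L'_props(1) by (rule Im_denominator_ge)
  then have w: "Im w > 0" using z by linarith
  obtain L where L: "(\<lambda>n. const_cf (b + \<beta>) (c + \<gamma>) n w) \<longlonglongrightarrow> L"
    and G: "cauchy_tr \<mu> w = 1 / (w - complex_of_real \<beta> - complex_of_real \<gamma> * L)"
    using meixner_tail_limit[OF \<mu> \<gamma>(1) w] by blast
  note L_props = const_cf_limit[OF \<gamma>(3) w L]
  have "complex_of_real (c + \<gamma>) * L'\<^sup>2 - (w - complex_of_real (b + \<beta>)) * L' + 1 = 0"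
    using L'_props(3) unfolding w_def F by (simp add: algebra_simps power2_eq_square)
  then have "L = L'" using fixed_point_root_unique[OF \<gamma>(3) w L_props(1) L'_props(1) L_props(3)] by blast
  have "cauchy_tr \<rho> z = cauchy_tr \<mu> w"
    unfolding w_def by (rule monotone_conv_cauchy_tr[OF conv z])
  also have "\<dots> = 1 / (w - complex_of_real \<beta> - complex_of_real \<gamma> * L')" using G \<open>L = L'\<close> by simp
  also have "\<dots> = 1 / (z - complex_of_real (\<beta> + \<beta>') - complex_of_real (\<gamma> + \<gamma>') * L')"
    unfolding w_def F by (simp add: algebra_simps)
  finally show ?thesis using L' L'_props(1) by blast
qed

lemma monotone_conv_free_meixner:
  assumes \<gamma>: "\<gamma> > 0" "\<gamma>' \<ge> 0" "c + \<gamma> \<ge> 0"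
    and \<mu>: "is_free_meixner \<mu> b c \<beta> \<gamma>" and \<nu>: "is_free_meixner \<nu> (b + \<beta>) (c + \<gamma>) \<beta>' \<gamma>'"
    and conv: "is_monotone_conv \<mu> \<nu> \<rho>"
  shows "is_free_meixner \<rho> b c (\<beta> + \<beta>') (\<gamma> + \<gamma>')"
proof -
  have \<rho>: "real_prob \<rho>" using conv unfolding is_monotone_conv_def by blast
  obtain K where "bounded_support \<mu> K" "bounded_support \<nu> K"
    using common_bounded_support \<mu> \<nu> unfolding is_free_meixner_def by blast
  then have "compact_support \<rho>"
    using compact_support_monotone_conv \<rho> monotone_conv_cauchy_tr[OF conv] by blast
  moreover have "has_jacobi_params \<rho> (\<lambda>n. if n = 0 then \<beta> + \<beta>' else b + (\<beta> + \<beta>'))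
      (\<lambda>n. if n = 0 then \<gamma> + \<gamma>' else c + (\<gamma> + \<gamma>'))"
    unfolding has_jacobi_params_def
  proof (intro allI impI)
    fix z :: complex assume z: "Im z > 0"
    then obtain L' where L': "(\<lambda>n. const_cf (b + (\<beta> + \<beta>')) (c + (\<gamma> + \<gamma>')) n z) \<longlonglongrightarrow> L'"
      "Im L' \<le> 0" and G: "cauchy_tr \<rho> z
        = 1 / (z - complex_of_real (\<beta> + \<beta>') - complex_of_real (\<gamma> + \<gamma>') * L')"
      using monotone_conv_tail[OF \<gamma> \<mu> \<nu> conv] by (auto simp: add.assoc)
    show "(\<lambda>n. jacobi_cf (\<lambda>n. if n = 0 then \<beta> + \<beta>' else b + (\<beta> + \<beta>'))
        (\<lambda>n. if n = 0 then \<gamma> + \<gamma>' else c + (\<gamma> + \<gamma>')) n 0 z) \<longlonglongrightarrow> cauchy_tr \<rho> z"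
      unfolding G by (rule meixner_cf_tendsto[OF L']) (use z \<gamma> in auto)
  qed
  ultimately show ?thesis unfolding is_free_meixner_def using \<rho> by blast
qed

section \<open>The Meixner equation\<close>

text \<open>The Cauchy transform G of mu_{b,c,0,t} satisfies the polynomial equation
  (c + t)(zG - 1)^2 - t(z - b)(zG - 1)G + t^2 G^2 = 0; it is obtained by eliminating the tail
  limit L from G = 1/(z - tL) and (c + t)L^2 - (z - b)L + 1 = 0.\<close>
definition meixner_poly :: "real \<Rightarrow> real \<Rightarrow> real \<Rightarrow> complex \<Rightarrow> complex \<Rightarrow> complex" where
  "meixner_poly b c t z G = complex_of_real (c + t) * (z * G - 1)\<^sup>2
     - complex_of_real t * (z - complex_of_real b) * (z * G - 1) * G + (complex_of_real t)\<^sup>2 * G\<^sup>2"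

lemma meixner_poly_cnj: "meixner_poly b c t (cnj z) (cnj G) = cnj (meixner_poly b c t z G)"
  unfolding meixner_poly_def by simp

lemma meixner_poly_in_zG:
  assumes "z \<noteq> 0"
  shows "meixner_poly b c t z (s / z) =
    (complex_of_real c + complex_of_real t * complex_of_real b / z + (complex_of_real t)\<^sup>2 / z\<^sup>2) * s\<^sup>2
    - (2 * complex_of_real c + complex_of_real t + complex_of_real t * complex_of_real b / z) * s
    + complex_of_real (c + t)"
  using assms unfolding meixner_poly_def by (simp add: field_simps power2_eq_square)

lemma meixner_poly_in_z:
  assumes "G \<noteq> 0"
  shows "meixner_poly b c t (v / G) G = complex_of_real c * v\<^sup>2
    - (2 * complex_of_real c + complex_of_real t - complex_of_real t * complex_of_real b * G) * v
    + (complex_of_real (c + t) - complex_of_real t * complex_of_real b * G + (complex_of_real t)\<^sup>2 * G\<^sup>2)"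
  using assms unfolding meixner_poly_def by (simp add: field_simps power2_eq_square)

lemma meixner_poly_upper:
  assumes m: "is_free_meixner m b c 0 t" and t: "t > 0" "c + t \<ge> 0" and z: "Im z > 0"
  shows "meixner_poly b c t z (cauchy_tr m z) = 0"
proof -
  obtain L where L: "(\<lambda>n. const_cf (b + 0) (c + t) n z) \<longlonglongrightarrow> L"
    and G: "cauchy_tr m z = 1 / (z - complex_of_real 0 - complex_of_real t * L)"
    using meixner_tail_limit[OF m t(1) z] by blast
  note L_props = const_cf_limit[OF t(2) z L]
  define D where "D = z - complex_of_real t * L"
  define X where "X = 1 / D"
  have "D \<noteq> 0" unfolding D_def
    using reciprocal_upper_half_plane(1)[OF Im_denominator_ge[of t L z 0]] t L_props(1) z by simp
  then have zX: "z * X - 1 = complex_of_real t * L * X" unfolding X_def D_def by (simp add: field_simps)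
  have "meixner_poly b c t z X = (complex_of_real t)\<^sup>2 * X\<^sup>2 *
      (complex_of_real (c + t) * L\<^sup>2 - (z - complex_of_real b) * L + 1)"
    unfolding meixner_poly_def zX by (simp add: algebra_simps power2_eq_square)
  then show ?thesis using L_props(3) G unfolding X_def D_def by simp
qed

text \<open>By conjugation symmetry and continuity the equation holds everywhere off the support.\<close>
lemma meixner_poly_off_support:
  assumes m: "is_free_meixner m b c 0 t" and t: "t > 0" "c + t \<ge> 0"
    and supp: "bounded_support m K" and z: "K < cmod z"
  shows "meixner_poly b c t z (cauchy_tr m z) = 0"
proof -
  interpret bounded_support m K by (rule supp)
  consider "Im z > 0" | "Im z < 0" | "Im z = 0" by linarith
  then show ?thesis
  proof cases
    case 1
    then show ?thesis by (rule meixner_poly_upper[OF m t])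
  next
    case 2
    then have "meixner_poly b c t (cnj z) (cauchy_tr m (cnj z)) = 0"
      by (intro meixner_poly_upper[OF m t]) simp
    then show ?thesis by (simp add: cauchy_tr_cnj meixner_poly_cnj)
  next
    case 3
    define zs where "zs n = z + \<i> * complex_of_real (inverse (real (Suc n)))" for n
    have "zs \<longlonglongrightarrow> z + \<i> * complex_of_real 0" unfolding zs_def
      by (rule tendsto_add[OF tendsto_const tendsto_mult[OF tendsto_const tendsto_of_real]])
        (rule LIMSEQ_inverse_real_of_nat)
    then have lim: "zs \<longlonglongrightarrow> z" by simp
    have outside: "cmod z \<le> cmod (zs n)" for n
    proof -
      have "cmod z = \<bar>Re (zs n)\<bar>" using 3 by (simp add: cmod_def zs_def)
      also have "\<dots> \<le> cmod (zs n)" by (rule abs_Re_le_cmod)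
      finally show ?thesis .
    qed
    have "(\<lambda>n. cauchy_tr m (zs n)) \<longlonglongrightarrow> cauchy_tr m z" by (rule cauchy_tr_tendsto[OF lim z outside])
    then have "(\<lambda>n. meixner_poly b c t (zs n) (cauchy_tr m (zs n)))
        \<longlonglongrightarrow> meixner_poly b c t z (cauchy_tr m z)"
      unfolding meixner_poly_def by (intro tendsto_intros lim)
    moreover have "meixner_poly b c t (zs n) (cauchy_tr m (zs n)) = 0" for n
      using 3 by (intro meixner_poly_upper[OF m t]) (simp add: zs_def)
    ultimately have "(\<lambda>n. 0) \<longlonglongrightarrow> meixner_poly b c t z (cauchy_tr m z)" by simp
    then show ?thesis using LIMSEQ_unique[OF tendsto_const] by metis
  qed
qed

text \<open>Two roots of a quadratic A s^2 - B s + C both close to 1 coincide, provided 1 is far from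
  being the midpoint B / (2A) of the roots.\<close>
lemma quadratic_roots_near_one:
  fixes A B C s0 s1 :: complex
  assumes "A * s0\<^sup>2 - B * s0 + C = 0" "A * s1\<^sup>2 - B * s1 + C = 0"
    and "cmod A * (cmod (s0 - 1) + cmod (s1 - 1)) < cmod (2 * A - B)"
  shows "s0 = s1"
proof (rule ccontr)
  assume "s0 \<noteq> s1"
  moreover have "(s0 - s1) * (A * (s0 + s1) - B) = (A * s0\<^sup>2 - B * s0 + C) - (A * s1\<^sup>2 - B * s1 + C)"
    by (simp add: algebra_simps power2_eq_square)
  ultimately have "A * (s0 + s1) - B = 0" using assms(1,2) by simp
  then have "2 * A - B = - (A * ((s0 - 1) + (s1 - 1)))" by (simp add: algebra_simps)
  then have "cmod (2 * A - B) = cmod A * cmod ((s0 - 1) + (s1 - 1))" by (simp add: norm_mult)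
  also have "\<dots> \<le> cmod A * (cmod (s0 - 1) + cmod (s1 - 1))"
    by (intro mult_left_mono norm_triangle_ineq) auto
  finally show False using assms(3) by simp
qed

text \<open>For large z the quadratic in s = zG is a small perturbation (by X = tb/z and Y = t^2/z^2) of
  c s^2 - (2c + t) s + (c + t) = (s - 1)(c s - (c + t)), whose roots are not symmetric about 1.\<close>
lemma meixner_small_terms:
  assumes z: "4 * (\<bar>b\<bar> + 1) \<le> cmod z" and t: "0 < t" "t \<le> 2"
  shows "cmod (complex_of_real t * complex_of_real b / z) \<le> t / 4"
    "cmod ((complex_of_real t)\<^sup>2 / z\<^sup>2) \<le> t / 8"
proof -
  have z4: "4 \<le> cmod z" using z by (smt (verit) abs_ge_zero)
  have "t * \<bar>b\<bar> \<le> t * (cmod z / 4)" using z t by (intro mult_left_mono) auto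
  then show "cmod (complex_of_real t * complex_of_real b / z) \<le> t / 4"
    using z4 t by (simp add: norm_mult norm_divide divide_simps)
  have "cmod ((complex_of_real t)\<^sup>2 / z\<^sup>2) = t\<^sup>2 / (cmod z)\<^sup>2" by (simp add: norm_divide norm_power)
  also have "\<dots> \<le> (2 * t) / 4\<^sup>2"
  proof (rule frac_le)
    show "t\<^sup>2 \<le> 2 * t" using t by (simp add: power2_eq_square)
    show "4\<^sup>2 \<le> (cmod z)\<^sup>2" using z4 by (intro power_mono) auto
  qed (use t in auto)
  finally show "cmod ((complex_of_real t)\<^sup>2 / z\<^sup>2) \<le> t / 8" by simp
qed

lemma perturbed_coefficients:
  fixes X Y :: complex
  assumes "cmod X \<le> t / 4" "cmod Y \<le> t / 8" "0 < t" "t \<le> 2"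
  shows "cmod (complex_of_real c + X + Y) \<le> \<bar>c\<bar> + 1"
    "t / 2 \<le> cmod (2 * (complex_of_real c + X + Y) - (2 * complex_of_real c + complex_of_real t + X))"
proof -
  have "cmod (complex_of_real c + X + Y) \<le> cmod (complex_of_real c + X) + cmod Y" by (rule norm_triangle_ineq)
  also have "\<dots> \<le> \<bar>c\<bar> + cmod X + cmod Y" using norm_triangle_ineq[of "complex_of_real c" X] by simp
  finally show "cmod (complex_of_real c + X + Y) \<le> \<bar>c\<bar> + 1" using assms by linarith
  have "cmod (X + 2 * Y) \<le> cmod X + 2 * cmod Y"
    using norm_triangle_ineq[of X "2 * Y"] by (simp add: norm_mult)
  moreover have "cmod (complex_of_real t) - cmod (X + 2 * Y) \<le> cmod (complex_of_real t - (X + 2 * Y))"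
    by (rule norm_triangle_ineq2)
  moreover have "complex_of_real t - (X + 2 * Y)
      = - (2 * (complex_of_real c + X + Y) - (2 * complex_of_real c + complex_of_real t + X))"
    by (simp add: algebra_simps)
  ultimately show "t / 2 \<le> cmod (2 * (complex_of_real c + X + Y) - (2 * complex_of_real c + complex_of_real t + X))"
    using assms by (simp only: norm_minus_cancel norm_of_real)
qed

lemma meixner_poly_unique_G:
  assumes z: "4 * (\<bar>b\<bar> + 1) \<le> cmod z" and t: "1 \<le> t" "t \<le> 2"
    and X: "meixner_poly b c t z X = 0" "cmod (z * X - 1) \<le> 1 / (8 * (\<bar>c\<bar> + 1))"
    and Y: "meixner_poly b c t z Y = 0" "cmod (z * Y - 1) \<le> 1 / (8 * (\<bar>c\<bar> + 1))"
  shows "X = Y"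
proof -
  define A where "A = complex_of_real c + complex_of_real t * complex_of_real b / z + (complex_of_real t)\<^sup>2 / z\<^sup>2"
  define B where "B = 2 * complex_of_real c + complex_of_real t + complex_of_real t * complex_of_real b / z"
  have z0: "z \<noteq> 0" using z by auto
  have root: "A * (z * G)\<^sup>2 - B * (z * G) + complex_of_real (c + t) = 0"
    if "meixner_poly b c t z G = 0" for G
    using that meixner_poly_in_zG[OF z0, of b c t "z * G"] z0 unfolding A_def B_def by simp
  have t0: "0 < t" using t by simp
  note small = meixner_small_terms[OF z t0 t(2)]
  have coeffs: "cmod A \<le> \<bar>c\<bar> + 1" "t / 2 \<le> cmod (2 * A - B)"
    unfolding A_def B_def by (rule perturbed_coefficients[OF small t0 t(2)])+
  have "cmod A * (cmod (z * X - 1) + cmod (z * Y - 1)) \<le> (\<bar>c\<bar> + 1) * (2 / (8 * (\<bar>c\<bar> + 1)))"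
    using coeffs(1) X(2) Y(2) t by (intro mult_mono) auto
  also have "\<dots> = 1 / 4" by (simp add: field_simps add_nonneg_pos)
  also have "\<dots> < cmod (2 * A - B)" using coeffs(2) t by linarith
  finally have "z * X = z * Y" by (rule quadratic_roots_near_one[OF root[OF X(1)] root[OF Y(1)]])
  then show ?thesis using z0 by simp
qed

lemma meixner_poly_unique_z:
  assumes G: "G \<noteq> 0" "\<bar>b\<bar> * cmod G \<le> 1 / 8" and t: "1 \<le> t"
    and z: "meixner_poly b c t z G = 0" "cmod (z * G - 1) \<le> 1 / (8 * (\<bar>c\<bar> + 1))"
    and z': "meixner_poly b c t z' G = 0" "cmod (z' * G - 1) \<le> 1 / (8 * (\<bar>c\<bar> + 1))"
  shows "z = z'"
proof -
  define B where "B = 2 * complex_of_real c + complex_of_real t - complex_of_real t * complex_of_real b * G"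
  define C where "C = complex_of_real (c + t) - complex_of_real t * complex_of_real b * G + (complex_of_real t)\<^sup>2 * G\<^sup>2"
  have root: "complex_of_real c * (x * G)\<^sup>2 - B * (x * G) + C = 0"
    if "meixner_poly b c t x G = 0" for x
    using that meixner_poly_in_z[OF G(1), of b c t "x * G"] G(1) unfolding B_def C_def by simp
  have tb: "t * (\<bar>b\<bar> * cmod G) \<le> t * (1 / 8)" using G t by (intro mult_left_mono) auto
  have "t - t * (\<bar>b\<bar> * cmod G) \<le> cmod (2 * complex_of_real c - B)"
    using norm_triangle_ineq2[of "complex_of_real t" "complex_of_real t * complex_of_real b * G"] t
    unfolding B_def by (simp add: norm_mult norm_minus_commute mult.assoc)
  then have far: "7 / 8 \<le> cmod (2 * complex_of_real c - B)" using tb t by linarith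
  have "cmod (complex_of_real c) * (cmod (z * G - 1) + cmod (z' * G - 1))
      \<le> (\<bar>c\<bar> + 1) * (2 / (8 * (\<bar>c\<bar> + 1)))"
    using z(2) z'(2) by (intro mult_mono) auto
  also have "\<dots> = 1 / 4" by (simp add: field_simps add_nonneg_pos)
  also have "\<dots> < cmod (2 * complex_of_real c - B)" using far by linarith
  finally have "cmod (complex_of_real c) * (cmod (z * G - 1) + cmod (z' * G - 1))
      < cmod (2 * complex_of_real c - B)" .
  then have "z * G = z' * G" by (rule quadratic_roots_near_one[OF root[OF z(1)] root[OF z'(1)]])
  then show ?thesis using G(1) by simp
qed

section \<open>The R-transform of free Meixner laws and free convolution\<close>

text \<open>The principal square root does not increase the distance to 1 (its real part is \<ge> 0).\<close>
lemma csqrt_near_one: "cmod (csqrt v - 1) \<le> cmod (v - 1)"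
proof -
  have "v - 1 = (csqrt v - 1) * (csqrt v + 1)" by (simp add: algebra_simps power2_eq_square[symmetric])
  then have eq: "cmod (v - 1) = cmod (csqrt v - 1) * cmod (csqrt v + 1)" by (simp add: norm_mult)
  have "1 \<le> Re (csqrt v + 1)" using Re_csqrt[of v] by simp
  also have "\<dots> \<le> cmod (csqrt v + 1)" by (rule complex_Re_le_cmod)
  finally show ?thesis using eq by (simp add: mult_le_cancel_left1)
qed

text \<open>The R-transform of mu_{b,c,0,1}: the root S(w) ~ w of c w S^2 - (1 - b w) S + w = 0.\<close>
definition meixner_R :: "real \<Rightarrow> real \<Rightarrow> complex \<Rightarrow> complex" where
  "meixner_R b c w = 2 * w / ((1 - complex_of_real b * w)
     + csqrt ((1 - complex_of_real b * w)\<^sup>2 - 4 * complex_of_real c * w\<^sup>2))"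

text \<open>For small w the square root is close to 1, so the denominator is close to 2.\<close>
lemma meixner_R_denominator:
  assumes wb: "(\<bar>b\<bar> + 1) * cmod w \<le> 1 / 8" and wc: "(\<bar>c\<bar> + 1) * cmod w \<le> 1 / 8"
  shows "1 \<le> cmod ((1 - complex_of_real b * w)
    + csqrt ((1 - complex_of_real b * w)\<^sup>2 - 4 * complex_of_real c * w\<^sup>2))"
proof -
  define A where "A = 1 - complex_of_real b * w"
  define Q where "Q = csqrt (A\<^sup>2 - 4 * complex_of_real c * w\<^sup>2)"
  have bw: "\<bar>b\<bar> * cmod w \<le> 1 / 8" and cw: "\<bar>c\<bar> * cmod w \<le> 1 / 8" and w8: "cmod w \<le> 1 / 8"
    using wb wc by (simp_all add: algebra_simps) (smt (verit) mult_nonneg_nonneg abs_ge_zero norm_ge_zero)+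
  have A1: "cmod (A - 1) \<le> 1 / 8" unfolding A_def using bw by (simp add: norm_mult)
  have "cmod (A + 1) = cmod ((A - 1) + 2)" by (simp add: algebra_simps)
  also have "\<dots> \<le> cmod (A - 1) + 2" using norm_triangle_ineq[of "A - 1" 2] by simp
  finally have Ap1: "cmod (A + 1) \<le> 17 / 8" using A1 by simp
  have eq: "A\<^sup>2 - 4 * complex_of_real c * w\<^sup>2 - 1 = (A - 1) * (A + 1) - 4 * complex_of_real c * w\<^sup>2"
    by (simp add: algebra_simps power2_eq_square)
  have "cmod ((A - 1) * (A + 1) - 4 * complex_of_real c * w\<^sup>2)
      \<le> cmod (A - 1) * cmod (A + 1) + 4 * (\<bar>c\<bar> * cmod w) * cmod w"
    using norm_triangle_ineq4[of "(A - 1) * (A + 1)" "4 * complex_of_real c * w\<^sup>2"]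
    by (simp add: norm_mult norm_power power2_eq_square mult.assoc)
  then have "cmod (A\<^sup>2 - 4 * complex_of_real c * w\<^sup>2 - 1)
      \<le> cmod (A - 1) * cmod (A + 1) + 4 * (\<bar>c\<bar> * cmod w) * cmod w"
    unfolding eq .
  also have "\<dots> \<le> (1 / 8) * (17 / 8) + 4 * (1 / 8) * (1 / 8)"
    using A1 Ap1 cw w8 by (intro add_mono mult_mono) auto
  finally have "cmod (A\<^sup>2 - 4 * complex_of_real c * w\<^sup>2 - 1) \<le> 21 / 64" by simp
  then have "cmod (Q - 1) \<le> 21 / 64" unfolding Q_def using csqrt_near_one order_trans by blast
  then have "cmod ((A + Q) - 2) \<le> 29 / 64"
    using A1 norm_triangle_ineq[of "A - 1" "Q - 1"] by (simp add: algebra_simps)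
  then have "1 \<le> cmod (A + Q)"
    using norm_triangle_ineq2[of 2 "A + Q"] by (simp add: norm_minus_commute)
  then show ?thesis unfolding A_def Q_def .
qed

lemma meixner_R_equation:
  assumes "(1 - complex_of_real b * w) + csqrt ((1 - complex_of_real b * w)\<^sup>2 - 4 * complex_of_real c * w\<^sup>2) \<noteq> 0"
  shows "complex_of_real c * w * (meixner_R b c w)\<^sup>2 - (1 - complex_of_real b * w) * meixner_R b c w + w = 0"
proof -
  define A where "A = 1 - complex_of_real b * w"
  define Q where "Q = csqrt (A\<^sup>2 - 4 * complex_of_real c * w\<^sup>2)"
  define D where "D = A + Q"
  have D: "D \<noteq> 0" using assms unfolding D_def A_def Q_def .
  have "complex_of_real c * w * (2 * w / D)\<^sup>2 - A * (2 * w / D) + w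
      = w * (4 * complex_of_real c * w\<^sup>2 - 2 * A * D + D\<^sup>2) / D\<^sup>2"
    using D by (simp add: field_simps power2_eq_square)
  also have "4 * complex_of_real c * w\<^sup>2 - 2 * A * D + D\<^sup>2 = Q\<^sup>2 - (A\<^sup>2 - 4 * complex_of_real c * w\<^sup>2)"
    unfolding D_def by (simp add: algebra_simps power2_eq_square)
  also have "\<dots> = 0" unfolding Q_def by simp
  finally show ?thesis unfolding meixner_R_def A_def Q_def D_def by simp
qed

text \<open>Since the R-transform of mu_{b,c,0,t} is t S, the inverse of its Cauchy transform should be
  1/w + t S(w).  This candidate solves the Meixner equation, lies far out and is close to 1/w.\<close>
lemma meixner_inverse_candidate:
  assumes w: "w \<noteq> 0" and wb: "(\<bar>b\<bar> + 1) * cmod w \<le> 1 / 8" and wc: "(\<bar>c\<bar> + 1) * cmod w \<le> 1 / 8"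
    and wR: "(R + 2) * cmod w \<le> 1" and t: "0 < t" "t \<le> 2"
  defines "z \<equiv> 1 / w + complex_of_real t * meixner_R b c w"
  shows "R < cmod z" "cmod (z * w - 1) \<le> 1 / (8 * (\<bar>c\<bar> + 1))" "meixner_poly b c t z w = 0"
proof -
  let ?S = "meixner_R b c w"
  note den = meixner_R_denominator[OF wb wc]
  have "cmod ?S \<le> 2 * cmod w"
    using den unfolding meixner_R_def by (simp add: norm_divide norm_mult divide_le_eq mult_le_cancel_left1)
  then have "t * cmod ?S \<le> 2 * (2 * cmod w)" using t by (intro mult_mono) auto
  then have tS: "cmod (complex_of_real t * ?S) \<le> 4 * cmod w" using t by (simp add: norm_mult)
  have w8: "cmod w \<le> 1 / 8" and wc': "cmod w \<le> 1 / (8 * (\<bar>c\<bar> + 1))"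
    using wb wc by (simp_all add: algebra_simps divide_simps) (smt (verit) mult_nonneg_nonneg abs_ge_zero norm_ge_zero)+
  have "z * w - 1 = (complex_of_real t * ?S) * w" using w unfolding z_def by (simp add: field_simps)
  then have "cmod (z * w - 1) \<le> (4 * cmod w) * cmod w"
    using tS by (simp add: norm_mult mult_right_mono)
  also have "\<dots> \<le> (4 * (1 / 8)) * (1 / (8 * (\<bar>c\<bar> + 1)))"
    using w8 wc' by (intro mult_mono) auto
  also have "\<dots> \<le> 1 / (8 * (\<bar>c\<bar> + 1))"
    using abs_ge_zero[of c] by (simp add: divide_simps) linarith
  finally show "cmod (z * w - 1) \<le> 1 / (8 * (\<bar>c\<bar> + 1))" .
  have "R + 2 \<le> cmod (1 / w)" using wR w by (simp add: norm_divide divide_simps mult.commute)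
  then show "R < cmod z"
    using norm_diff_ineq[of "1 / w" "complex_of_real t * ?S"] tS w8 unfolding z_def by linarith
  have "meixner_poly b c t z w = (complex_of_real t)\<^sup>2 * w *
      (complex_of_real c * w * ?S\<^sup>2 - (1 - complex_of_real b * w) * ?S + w)"
    using w unfolding z_def meixner_poly_def by (simp add: field_simps power2_eq_square)
  moreover have "(1 - complex_of_real b * w)
      + csqrt ((1 - complex_of_real b * w)\<^sup>2 - 4 * complex_of_real c * w\<^sup>2) \<noteq> 0"
    using den by auto
  ultimately show "meixner_poly b c t z w = 0" using meixner_R_equation by simp
qed

text \<open>Near infinity the Cauchy transform of mu_{b,c,0,t} (t in [1, 2]) is invertible, with inverse
  1/w + t S(w): the candidate is a preimage by uniqueness of solutions G of the Meixner equation, and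
  it is the only preimage far out by uniqueness of solutions z.\<close>
lemma meixner_cauchy_inv:
  assumes m: "is_free_meixner m b c 0 t" and t: "1 \<le> t" "t \<le> 2" "c + t \<ge> 0"
    and supp: "bounded_support m K"
    and R: "R = K + 8 * (\<bar>c\<bar> + 1) * K + 4 * (\<bar>b\<bar> + 1)"
    and w: "w \<noteq> 0" and wb: "(\<bar>b\<bar> + 1) * cmod w \<le> 1 / 8" and wc: "(\<bar>c\<bar> + 1) * cmod w \<le> 1 / 8"
    and wR: "(R + 2) * cmod w \<le> 1"
  shows "(\<exists>!z. cmod z > R \<and> cauchy_tr m z = w)
    \<and> cauchy_inv m R w = 1 / w + complex_of_real t * meixner_R b c w"
proof -
  interpret bounded_support m K by (rule supp)
  define zs where "zs = 1 / w + complex_of_real t * meixner_R b c w"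
  have c1: "0 < \<bar>c\<bar> + 1" and K: "0 \<le> K" using K_nonneg by (simp_all add: add_nonneg_pos)
  have zs: "R < cmod zs" "cmod (zs * w - 1) \<le> 1 / (8 * (\<bar>c\<bar> + 1))" "meixner_poly b c t zs w = 0"
    using meixner_inverse_candidate[OF w wb wc wR] t unfolding zs_def by auto
  have far: "4 * (\<bar>b\<bar> + 1) \<le> cmod z" "meixner_poly b c t z (cauchy_tr m z) = 0"
    "cmod (z * cauchy_tr m z - 1) \<le> 1 / (8 * (\<bar>c\<bar> + 1))" if z: "R < cmod z" for z
  proof -
    have P: "0 \<le> 8 * (\<bar>c\<bar> + 1) * K" using K c1 by simp
    have h: "8 * (\<bar>c\<bar> + 1) * K \<le> cmod z - K" "4 * (\<bar>b\<bar> + 1) \<le> cmod z" "K < cmod z"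
      by (smt (verit) z P K R abs_ge_zero[of b])+
    show "4 * (\<bar>b\<bar> + 1) \<le> cmod z" by (rule h(2))
    show "meixner_poly b c t z (cauchy_tr m z) = 0"
      using meixner_poly_off_support[OF m _ t(3) supp h(3)] t by simp
    have "cmod (z * cauchy_tr m z - 1) \<le> K / (cmod z - K)" by (rule cauchy_tr_near_infinity[OF h(3)])
    also have "\<dots> \<le> 1 / (8 * (\<bar>c\<bar> + 1))" using h(1,3) c1 by (simp add: divide_simps mult.commute)
    finally show "cmod (z * cauchy_tr m z - 1) \<le> 1 / (8 * (\<bar>c\<bar> + 1))" .
  qed
  have Gzs: "cauchy_tr m zs = w"
    using meixner_poly_unique_G[OF far(1)[OF zs(1)] t(1,2) far(2,3)[OF zs(1)]] zs(2,3) by blast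
  have bw: "\<bar>b\<bar> * cmod w \<le> 1 / 8" using wb by (simp add: algebra_simps) (smt (verit) norm_ge_zero)
  have unique: "z = zs" if "R < cmod z" "cauchy_tr m z = w" for z
    by (rule meixner_poly_unique_z[OF w bw t(1)]) (use far[OF that(1)] that(2) zs in auto)
  have "cmod zs > R \<and> cauchy_tr m zs = w" using zs(1) Gzs by simp
  then have "(\<exists>!z. cmod z > R \<and> cauchy_tr m z = w) \<and> cauchy_inv m R w = zs"
    unfolding cauchy_inv_def using unique by (auto intro!: the_equality)
  then show ?thesis unfolding zs_def .
qed

text \<open>Part 2 of the theorem: mu_{b,c} |> mu_{b,c+1} = mu_{b,c,0,2}, whose R-transform 2S is twice
  that of mu_{b,c}, so the monotone convolution is the free convolution square of mu_{b,c}.\<close>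
lemma monotone_conv_free_square:
  assumes c: "c \<ge> -1" and \<mu>: "is_free_meixner \<mu> b c 0 1" and \<nu>: "is_free_meixner \<nu> b (c + 1) 0 1"
    and conv: "is_monotone_conv \<mu> \<nu> \<rho>"
  shows "is_free_conv \<mu> \<mu> \<rho>"
proof -
  have "is_free_meixner \<rho> b c (0 + 0) (1 + 1)"
    by (rule monotone_conv_free_meixner[OF _ _ _ \<mu> _ conv]) (use c \<nu> in auto)
  then have \<rho>: "is_free_meixner \<rho> b c 0 2" by simp
  obtain K where K: "bounded_support \<mu> K" "bounded_support \<rho> K"
    using common_bounded_support \<mu> \<rho> unfolding is_free_meixner_def by blast
  define R where "R = K + 8 * (\<bar>c\<bar> + 1) * K + 4 * (\<bar>b\<bar> + 1)"
  define r where "r = min (1 / (8 * (\<bar>b\<bar> + 1))) (min (1 / (8 * (\<bar>c\<bar> + 1))) (1 / (R + 2)))"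
  have "0 \<le> R" unfolding R_def using bounded_support.K_nonneg[OF K(1)] by (simp add: add_nonneg_nonneg)
  then have r: "r > 0" unfolding r_def by (simp add: add_nonneg_pos)
  have inv: "(\<exists>!z. cmod z > R \<and> cauchy_tr \<mu> z = w) \<and> (\<exists>!z. cmod z > R \<and> cauchy_tr \<rho> z = w)
      \<and> cauchy_inv \<mu> R w = 1 / w + meixner_R b c w \<and> cauchy_inv \<rho> R w = 1 / w + 2 * meixner_R b c w"
    if w: "0 < cmod w" "cmod w < r" for w
  proof -
    have small: "(\<bar>b\<bar> + 1) * cmod w \<le> 1 / 8" "(\<bar>c\<bar> + 1) * cmod w \<le> 1 / 8" "(R + 2) * cmod w \<le> 1"
      using w \<open>0 \<le> R\<close> unfolding r_def by (auto simp: field_simps add_nonneg_pos)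
    show ?thesis
      using meixner_cauchy_inv[OF \<mu> _ _ _ K(1) R_def _ small] meixner_cauchy_inv[OF \<rho> _ _ _ K(2) R_def _ small]
        w c by auto
  qed
  have "\<exists>R r. r > 0 \<and> (\<forall>w. 0 < cmod w \<and> cmod w < r \<longrightarrow>
      (\<forall>m\<in>{\<mu>, \<mu>, \<rho>}. \<exists>!z. cmod z > R \<and> cauchy_tr m z = w) \<and>
      cauchy_inv \<rho> R w - 1 / w = (cauchy_inv \<mu> R w - 1 / w) + (cauchy_inv \<mu> R w - 1 / w))"
    using r inv by (intro exI[of _ R] exI[of _ r]) auto
  then show ?thesis using \<mu> \<rho> unfolding is_free_conv_def is_free_meixner_def by blast
qed

theorem mainTheorem11:
  fixes b c \<beta> \<beta>' \<gamma> \<gamma>' :: real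
  shows "(\<gamma> > 0 \<and> \<gamma>' \<ge> 0 \<and> c \<ge> - \<gamma> \<longrightarrow>
          (\<forall>\<mu> \<nu> \<rho>. is_free_meixner \<mu> b c \<beta> \<gamma> \<and> is_free_meixner \<nu> (b + \<beta>) (c + \<gamma>) \<beta>' \<gamma>'
              \<and> is_monotone_conv \<mu> \<nu> \<rho> \<longrightarrow> is_free_meixner \<rho> b c (\<beta> + \<beta>') (\<gamma> + \<gamma>')))
       \<and> (c \<ge> -1 \<longrightarrow>
          (\<forall>\<mu> \<nu> \<rho>. is_free_meixner \<mu> b c 0 1 \<and> is_free_meixner \<nu> b (c + 1) 0 1
              \<and> is_monotone_conv \<mu> \<nu> \<rho> \<longrightarrow> is_free_conv \<mu> \<mu> \<rho>))"
proof (intro conjI impI allI)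
  fix \<mu> \<nu> \<rho> :: "real measure"
  assume "\<gamma> > 0 \<and> \<gamma>' \<ge> 0 \<and> c \<ge> - \<gamma>" and "is_free_meixner \<mu> b c \<beta> \<gamma>
    \<and> is_free_meixner \<nu> (b + \<beta>) (c + \<gamma>) \<beta>' \<gamma>' \<and> is_monotone_conv \<mu> \<nu> \<rho>"
  then show "is_free_meixner \<rho> b c (\<beta> + \<beta>') (\<gamma> + \<gamma>')"
    using monotone_conv_free_meixner[of \<gamma> \<gamma>' c \<mu> b \<beta>] by auto
next
  fix \<mu> \<nu> \<rho> :: "real measure"
  assume "c \<ge> -1" and "is_free_meixner \<mu> b c 0 1 \<and> is_free_meixner \<nu> b (c + 1) 0 1
    \<and> is_monotone_conv \<mu> \<nu> \<rho>"
  then show "is_free_conv \<mu> \<mu> \<rho>" using monotone_conv_free_square by blast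
qed

end
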